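(* Let $G$ be an odd unicyclic graph on $n$ vertices $1,\ldots,n$ and edges $e_1,\ldots,e_n$ with cycle $C$. For an edge $e_k$ and distinct vertices $i,j$: $e_k\notin C$ and $i,j\notin G\setminus e_k[C]$ if and only if $e_k$ is an edge of both $P_{i-i^*}$ and $P_{j-j^*}$. Moreover, for vertices $i,j$ and an edge $e_k$: (a) if $e_k\in C$ and $e_k\in P_{i-j}$, then $d(e_k,i)+d(e_k,j)$ and $d(i,j)$ have different parity; (b) if $e_k\in C$ and $e_k\notin P_{i-j}$, then $d(e_k,i)+d(e_k,j)$ and $d(i,j)$ have the same parity; (c) if $e_k\in P_{i-i^*}\cap P_{j-j^*}$, then $d(e_k,i)+d(e_k,j)$ and $d(i,j)$ have the same parity.
   Context: A unicyclic graph on $n$ vertices is a simple connected graph with $n$ edges; it is odd if its unique cycle $C$ has odd length. $d$ is graph distance; for vertex $j$ and edge $e=\{l,m\}$, $d(e,j):=\min\{d(j,l),d(j,m)\}$. $P_{i-j}$ denotes the shortest path between $i$ and $j$. For a vertex $i$, $i^*$ is the vertex of $C$ closest to $i$ ($i^*=i$ if $i\in C$), and $P_{i-i^*}$ is the unique shortest path from $i$ to $C$. For an edge $e$ not on $C$, $G\setminus e[C]$ is the component of $G\setminus e$ containing $C$; for $e$ on $C$, $G\setminus e[C]:=G\setminus e$. *)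

theory Defs
  imports Main
begin

definition simple_graph :: "'a set \<Rightarrow> 'a set set \<Rightarrow> bool" where
  "simple_graph V E \<longleftrightarrow> finite V \<and> (\<forall>e\<in>E. e \<subseteq> V \<and> card e = 2)"

definition walk :: "'a set \<Rightarrow> 'a set set \<Rightarrow> 'a list \<Rightarrow> bool" where
  "walk V E xs \<longleftrightarrow> xs \<noteq> [] \<and> set xs \<subseteq> V \<and>
     (\<forall>k. Suc k < length xs \<longrightarrow> {xs ! k, xs ! Suc k} \<in> E)"

definition walk_edges :: "'a list \<Rightarrow> 'a set set" where
  "walk_edges xs = (\<lambda>(a, b). {a, b}) ` set (zip xs (tl xs))"

definition connected_graph :: "'a set \<Rightarrow> 'a set set \<Rightarrow> bool" where
  "connected_graph V E \<longleftrightarrow>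
     (\<forall>u\<in>V. \<forall>v\<in>V. \<exists>xs. walk V E xs \<and> hd xs = u \<and> last xs = v)"

definition unicyclic :: "'a set \<Rightarrow> 'a set set \<Rightarrow> bool" where
  "unicyclic V E \<longleftrightarrow> simple_graph V E \<and> connected_graph V E \<and> card E = card V"

definition gdist :: "'a set \<Rightarrow> 'a set set \<Rightarrow> 'a \<Rightarrow> 'a \<Rightarrow> nat" where
  "gdist V E u v = (LEAST k. \<exists>xs. walk V E xs \<and> hd xs = u \<and> last xs = v \<and> length xs = Suc k)"

definition edist :: "'a set \<Rightarrow> 'a set set \<Rightarrow> 'a set \<Rightarrow> 'a \<Rightarrow> nat" where
  "edist V E e j = Min ((\<lambda>l. gdist V E j l) ` e)"

definition shortest_path :: "'a set \<Rightarrow> 'a set set \<Rightarrow> 'a list \<Rightarrow> 'a \<Rightarrow> 'a \<Rightarrow> bool" where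
  "shortest_path V E xs u v \<longleftrightarrow> walk V E xs \<and> hd xs = u \<and> last xs = v \<and>
     length xs = Suc (gdist V E u v)"

definition is_cycle :: "'a set \<Rightarrow> 'a set set \<Rightarrow> 'a list \<Rightarrow> bool" where
  "is_cycle V E cyc \<longleftrightarrow> length cyc \<ge> 3 \<and> distinct cyc \<and> walk V E cyc \<and> {last cyc, hd cyc} \<in> E"

definition cycle_edges :: "'a list \<Rightarrow> 'a set set" where
  "cycle_edges cyc = insert {last cyc, hd cyc} (walk_edges cyc)"

(* P_{i-i*}: a shortest path from i to the vertex i* of the cycle closest to i *)
definition path_to_cycle :: "'a set \<Rightarrow> 'a set set \<Rightarrow> 'a list \<Rightarrow> 'a \<Rightarrow> 'a list \<Rightarrow> bool" where
  "path_to_cycle V E cyc i p \<longleftrightarrow>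
     (\<exists>c\<in>set cyc. shortest_path V E p i c \<and> (\<forall>c'\<in>set cyc. gdist V E i c \<le> gdist V E i c'))"

(* vertex set of G \ e [C]: component of G - e containing the cycle C (all of V if e is on C) *)
definition comp_C :: "'a set \<Rightarrow> 'a set set \<Rightarrow> 'a list \<Rightarrow> 'a set \<Rightarrow> 'a set" where
  "comp_C V E cyc e = (if e \<in> cycle_edges cyc then V
     else {v \<in> V. \<exists>xs. walk V (E - {e}) xs \<and> hd xs \<in> set cyc \<and> last xs = v})"

end

(*
  Deleting any edge e0 of the cycle C of a unicyclic graph G leaves a spanning tree T.  In a tree
  the distance to a fixed root changes by exactly one along every edge, because a connected graph
  needs one BFS parent edge per non-root vertex and a tree has no further edges.  Hence the length
  of a walk in T has the parity of the sum of the root distances of its ends.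

  (a) On a shortest i-j path through e the distances of i and j to e add up to d(i,j) - 1.
  (b) Take T = G - e, rooted at an end a of e.  A shortest i-j path avoiding e lies in T, and so
  does a shortest path from any vertex to the nearer end of e; the other end b is at even distance
  from a in T because C is odd.
  (c) Every edge off C is a bridge, so it lies on P_{i-i*} exactly when it separates i from C.  If
  it lies on both P_{i-i*} and P_{j-j*}, both paths traverse it in the same direction, and a
  shortest i-j path never meets C; so the parts of P_{i-i*} and P_{j-j*} before e and a shortest
  i-j path all lie in a tree G - e0.
*)

theory Submission
  imports Defs
begin

section \<open>Walks\<close>

lemma last_append_tl: "ys \<noteq> [] \<Longrightarrow> last xs = hd ys \<Longrightarrow> last (xs @ tl ys) = last ys"
  by (cases ys) auto

lemma last_take_Suc: "t < length xs \<Longrightarrow> last (take (Suc t) xs) = xs ! t"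
  by (simp add: take_Suc_conv_app_nth)

lemma walk_edges_Nil [simp]: "walk_edges [] = {}"
  and walk_edges_singleton [simp]: "walk_edges [x] = {}"
  and walk_edges_Cons_Cons [simp]: "walk_edges (x # y # xs) = insert {x, y} (walk_edges (y # xs))"
  by (simp_all add: walk_edges_def)

lemma walk_edges_conv_nth: "walk_edges xs = {{xs ! k, xs ! Suc k} | k. Suc k < length xs}"
proof -
  have "set (zip xs (tl xs)) = {(xs ! k, xs ! Suc k) | k. Suc k < length xs}"
    by (auto simp: set_zip nth_tl)
  then show ?thesis unfolding walk_edges_def by auto
qed

lemma walk_edge_subset_set: "f \<in> walk_edges xs \<Longrightarrow> f \<subseteq> set xs"
  unfolding walk_edges_conv_nth by auto

lemma walk_iff_walk_edges: "walk V E xs \<longleftrightarrow> xs \<noteq> [] \<and> set xs \<subseteq> V \<and> walk_edges xs \<subseteq> E"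
  unfolding walk_def walk_edges_conv_nth by blast

lemma walk_edges_append:
  "xs \<noteq> [] \<Longrightarrow> ys \<noteq> [] \<Longrightarrow>
    walk_edges (xs @ ys) = walk_edges xs \<union> insert {last xs, hd ys} (walk_edges ys)"
proof (induction xs rule: induct_list012)
  case (3 x y zs)
  then show ?case by auto
qed (auto simp: neq_Nil_conv)

lemma walk_edges_append_subset: "walk_edges xs \<union> walk_edges ys \<subseteq> walk_edges (xs @ ys)"
  by (cases "xs = [] \<or> ys = []") (auto simp: walk_edges_append)

lemma walk_edges_take_subset: "walk_edges (take n xs) \<subseteq> walk_edges xs"
  and walk_edges_drop_subset: "walk_edges (drop n xs) \<subseteq> walk_edges xs"
  using walk_edges_append_subset[of "take n xs" "drop n xs"] by auto

lemma walk_edges_Cons: "xs \<noteq> [] \<Longrightarrow> walk_edges (x # xs) = insert {x, hd xs} (walk_edges xs)"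
  by (cases xs) auto

lemma walk_edges_rev [simp]: "walk_edges (rev xs) = walk_edges xs"
proof (induction xs)
  case (Cons x xs)
  then show ?case
    by (cases "xs = []") (auto simp: walk_edges_append walk_edges_Cons last_rev insert_commute)
qed simp

lemma walk_rev: "walk V E xs \<Longrightarrow> walk V E (rev xs)"
  by (simp add: walk_iff_walk_edges)

lemma walk_take: "walk V E xs \<Longrightarrow> 0 < n \<Longrightarrow> walk V E (take n xs)"
  using walk_edges_take_subset[of n xs] set_take_subset[of n xs]
  by (auto simp: walk_iff_walk_edges)

lemma walk_drop: "walk V E xs \<Longrightarrow> n < length xs \<Longrightarrow> walk V E (drop n xs)"
  using walk_edges_drop_subset[of n xs] set_drop_subset[of n xs]
  by (auto simp: walk_iff_walk_edges)

lemma walk_append: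
  assumes "walk V E xs" "walk V E ys" "last xs = hd ys"
  shows "walk V E (xs @ tl ys)"
proof (cases "tl ys = []")
  case False
  have "walk_edges ys = insert {hd ys, hd (tl ys)} (walk_edges (tl ys))"
    using False walk_edges_Cons[of "tl ys" "hd ys"] by (cases ys) auto
  then show ?thesis
    using assms False by (auto simp: walk_iff_walk_edges walk_edges_append dest: list.set_sel(2))
qed (use assms in simp)

lemma walk_Diff: "walk V E xs \<Longrightarrow> walk_edges xs \<inter> X = {} \<Longrightarrow> walk V (E - X) xs"
  by (auto simp: walk_iff_walk_edges)

lemma walk_Diff_edge_at: "walk V E xs \<Longrightarrow> x \<notin> set xs \<Longrightarrow> x \<in> f \<Longrightarrow> walk V (E - {f}) xs"
  using walk_edge_subset_set by (fastforce intro: walk_Diff)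

lemma walk_Cons_Cons: "walk V E (x # y # xs) \<longleftrightarrow> x \<in> V \<and> {x, y} \<in> E \<and> walk V E (y # xs)"
  by (auto simp: walk_iff_walk_edges)

section \<open>Reachability and distance\<close>

definition reachable :: "'a set \<Rightarrow> 'a set set \<Rightarrow> 'a \<Rightarrow> 'a \<Rightarrow> bool" where
  "reachable V E u v \<longleftrightarrow> (\<exists>xs. walk V E xs \<and> hd xs = u \<and> last xs = v)"

lemma connected_graph_iff_reachable: "connected_graph V E \<longleftrightarrow> (\<forall>u\<in>V. \<forall>v\<in>V. reachable V E u v)"
  unfolding connected_graph_def reachable_def ..

lemma reachable_walk: "walk V E xs \<Longrightarrow> reachable V E (hd xs) (last xs)"
  unfolding reachable_def by blast

lemma reachable_refl: "u \<in> V \<Longrightarrow> reachable V E u u"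
  using reachable_walk[of V E "[u]"] by (simp add: walk_def)

lemma reachable_edge: "{u, v} \<in> E \<Longrightarrow> u \<in> V \<Longrightarrow> v \<in> V \<Longrightarrow> reachable V E u v"
  using reachable_walk[of V E "[u, v]"] by (simp add: walk_iff_walk_edges)

lemma reachable_sym: "reachable V E u v \<Longrightarrow> reachable V E v u"
  unfolding reachable_def by (metis walk_rev hd_rev last_rev)

lemma reachable_trans: "reachable V E u v \<Longrightarrow> reachable V E v w \<Longrightarrow> reachable V E u w"
  unfolding reachable_def by (metis walk_append walk_def hd_append2 last_append_tl)

lemma reachable_in_V: "reachable V E u v \<Longrightarrow> u \<in> V \<and> v \<in> V"
  unfolding reachable_def walk_def by auto

lemma walk_reachable_nth: "walk V E xs \<Longrightarrow> t < length xs \<Longrightarrow> reachable V E (hd xs) (xs ! t)"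
proof -
  assume "walk V E xs" "t < length xs"
  moreover have "last (take (Suc t) xs) = xs ! t"
    using \<open>t < length xs\<close> by (rule last_take_Suc)
  ultimately show ?thesis
    using reachable_walk[OF walk_take[of V E xs "Suc t"]] by simp
qed

lemma walk_reachable: "walk V E xs \<Longrightarrow> x \<in> set xs \<Longrightarrow> y \<in> set xs \<Longrightarrow> reachable V E x y"
proof -
  assume w: "walk V E xs" and "x \<in> set xs" "y \<in> set xs"
  then obtain i j where "i < length xs" "x = xs ! i" "j < length xs" "y = xs ! j"
    by (metis in_set_conv_nth)
  then have "reachable V E (hd xs) x" "reachable V E (hd xs) y"
    using walk_reachable_nth[OF w] by simp_all
  then show ?thesis
    using reachable_sym reachable_trans by metis
qed

lemma reachable_Diff_edge:
  assumes ab: "reachable V (E - {{a, b}}) a b" and uv: "reachable V E u v"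
  shows "reachable V (E - {{a, b}}) u v"
proof -
  have "reachable V (E - {{a, b}}) (hd xs) (last xs)" if "walk V E xs" for xs
    using that
  proof (induction xs rule: induct_list012)
    case (2 x)
    then show ?case by (simp add: walk_def reachable_refl)
  next
    case (3 x y zs)
    then have "x \<in> V" "y \<in> V" "{x, y} \<in> E" "walk V E (y # zs)"
      by (auto simp: walk_Cons_Cons walk_def)
    then have "reachable V (E - {{a, b}}) x y"
      using ab reachable_sym[OF ab] reachable_edge[of x y "E - {{a, b}}"]
      by (cases "{x, y} = {a, b}") (auto simp: doubleton_eq_iff)
    moreover have "reachable V (E - {{a, b}}) y (last (y # zs))"
      using 3 \<open>walk V E (y # zs)\<close> by simp
    ultimately show ?case
      using reachable_trans by fastforce
  qed (simp add: walk_def)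
  then show ?thesis
    using uv unfolding reachable_def[of V E] by blast
qed

lemma gdist_le_walk: "walk V E xs \<Longrightarrow> gdist V E (hd xs) (last xs) \<le> length xs - 1"
  unfolding gdist_def by (rule Least_le) (auto simp: walk_def)

lemma reachable_shortest_path: "reachable V E u v \<Longrightarrow> \<exists>p. shortest_path V E p u v"
  unfolding reachable_def shortest_path_def gdist_def
  by (rule LeastI_ex) (metis Suc_pred length_greater_0_conv walk_def)

lemma gdist_triangle:
  assumes "reachable V E u v" "reachable V E v w"
  shows "gdist V E u w \<le> gdist V E u v + gdist V E v w"
proof -
  obtain p q where p: "shortest_path V E p u v" and q: "shortest_path V E q v w"
    using assms reachable_shortest_path by metis
  then have "walk V E (p @ tl q)" "hd (p @ tl q) = u" "last (p @ tl q) = w"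
    using walk_append[of V E p q] last_append_tl[of q p]
    by (auto simp: shortest_path_def walk_def)
  then show ?thesis
    using gdist_le_walk[of V E "p @ tl q"] p q by (simp add: shortest_path_def)
qed

lemma gdist_sym: "reachable V E u v \<Longrightarrow> gdist V E v u = gdist V E u v"
proof -
  have le: "gdist V E v u \<le> gdist V E u v" if uv: "reachable V E u v" for u v
  proof -
    obtain p where "shortest_path V E p u v"
      using uv reachable_shortest_path by metis
    then show ?thesis
      using gdist_le_walk[OF walk_rev] by (fastforce simp: shortest_path_def hd_rev last_rev)
  qed
  show "reachable V E u v \<Longrightarrow> ?thesis"
    using le le[OF reachable_sym] by (simp add: le_antisym)
qed

lemma gdist_self: "u \<in> V \<Longrightarrow> gdist V E u u = 0"
  using gdist_le_walk[of V E "[u]"] by (simp add: walk_def)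

lemma gdist_edge_le:
  assumes "reachable V E r x" "{x, y} \<in> E" "y \<in> V"
  shows "gdist V E r y \<le> gdist V E r x + 1"
proof -
  have "x \<in> V" using reachable_in_V[OF assms(1)] by blast
  then have "reachable V E x y" "gdist V E x y \<le> 1"
    using assms reachable_edge gdist_le_walk[of V E "[x, y]"] by (auto simp: walk_iff_walk_edges)
  then show ?thesis
    using gdist_triangle[OF assms(1)] by fastforce
qed

lemma shortest_path_gdist_nth:
  assumes p: "shortest_path V E p u v" and t: "t < length p"
  shows "gdist V E u (p ! t) = t" and "gdist V E (p ! t) v = length p - 1 - t"
proof -
  have w: "walk V E p" "hd p = u" "last p = v" "length p = Suc (gdist V E u v)"
    using p by (auto simp: shortest_path_def)
  have "walk V E (take (Suc t) p)" "walk V E (drop t p)"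
    using w t by (auto intro: walk_take walk_drop)
  moreover have "hd (take (Suc t) p) = u" "hd (drop t p) = p ! t" "last (drop t p) = v"
    using w t by (simp_all add: hd_drop_conv_nth)
  moreover have "last (take (Suc t) p) = p ! t"
    using t by (rule last_take_Suc)
  ultimately have "gdist V E u (p ! t) \<le> t" "gdist V E (p ! t) v \<le> length p - 1 - t"
    "reachable V E u (p ! t)" "reachable V E (p ! t) v"
    using gdist_le_walk reachable_walk t by fastforce+
  moreover have "gdist V E u v \<le> gdist V E u (p ! t) + gdist V E (p ! t) v"
    using calculation(3,4) by (rule gdist_triangle)
  ultimately show "gdist V E u (p ! t) = t" "gdist V E (p ! t) v = length p - 1 - t"
    using w(4) t by linarith+
qed

lemma shortest_path_distinct: "shortest_path V E p u v \<Longrightarrow> distinct p"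
  by (metis distinct_conv_nth shortest_path_gdist_nth(1))

lemma shortest_path_rev: "shortest_path V E p u v \<Longrightarrow> shortest_path V E (rev p) v u"
  using gdist_sym[OF reachable_walk, of V E p]
  by (auto simp: shortest_path_def walk_rev hd_rev last_rev)

lemma shortest_path_to_nearest_avoids_edge:
  assumes p: "shortest_path V E p x y" and near: "\<forall>z\<in>e. gdist V E x y \<le> gdist V E x z"
  shows "e \<notin> walk_edges p"
proof
  assume "e \<in> walk_edges p"
  then obtain s where s: "Suc s < length p" "e = {p ! s, p ! Suc s}"
    unfolding walk_edges_conv_nth by blast
  then have "gdist V E x y \<le> s"
    using near shortest_path_gdist_nth(1)[OF p, of s] by simp
  moreover have "length p = Suc (gdist V E x y)"
    using p by (simp add: shortest_path_def)
  ultimately show False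
    using s(1) by simp
qed

lemma shortest_path_split_at_edge:
  assumes p: "shortest_path V E p u v" and k: "Suc k < length p"
  shows "reachable V (E - {{p ! k, p ! Suc k}}) u (p ! k)"
    and "reachable V (E - {{p ! k, p ! Suc k}}) (p ! Suc k) v"
proof -
  have w: "walk V E p" "hd p = u" "last p = v" and d: "distinct p"
    using p shortest_path_distinct[OF p] by (simp_all add: shortest_path_def)
  have "p ! Suc k \<notin> set (take (Suc k) p)" "p ! k \<notin> set (drop (Suc k) p)"
    using d k by (auto simp: in_set_conv_nth nth_eq_iff_index_eq)
  then have "{p ! k, p ! Suc k} \<notin> walk_edges (take (Suc k) p)"
    "{p ! k, p ! Suc k} \<notin> walk_edges (drop (Suc k) p)"
    using walk_edge_subset_set by blast+
  then have "walk V (E - {{p ! k, p ! Suc k}}) (take (Suc k) p)"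
    "walk V (E - {{p ! k, p ! Suc k}}) (drop (Suc k) p)"
    using walk_Diff[OF walk_take[OF w(1)], of "Suc k" "{{p ! k, p ! Suc k}}"]
      walk_Diff[OF walk_drop[OF w(1) k], of "{{p ! k, p ! Suc k}}"] by simp_all
  moreover have "hd (take (Suc k) p) = u" "hd (drop (Suc k) p) = p ! Suc k"
    "last (drop (Suc k) p) = v"
    using w k by (simp_all add: hd_drop_conv_nth)
  moreover have "last (take (Suc k) p) = p ! k"
    using k by (simp add: last_take_Suc)
  ultimately show "reachable V (E - {{p ! k, p ! Suc k}}) u (p ! k)"
    "reachable V (E - {{p ! k, p ! Suc k}}) (p ! Suc k) v"
    using reachable_walk by metis+
qed

lemma edist_doubleton: "edist V E {a, b} x = min (gdist V E x a) (gdist V E x b)"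
  unfolding edist_def by simp

lemma edist_shortest_path_edge:
  assumes "shortest_path V E p u v" "Suc k < length p"
  shows "edist V E {p ! k, p ! Suc k} u = k"
proof -
  have "k < length p" using assms(2) by simp
  then show ?thesis
    using shortest_path_gdist_nth(1)[OF assms(1)] assms(2) by (simp add: edist_doubleton)
qed

lemma shortest_path_edist_add:
  assumes p: "shortest_path V E p i j" and e: "e \<in> walk_edges p"
  shows "edist V E e i + edist V E e j + 1 = gdist V E i j"
proof -
  obtain k where k: "Suc k < length p" "e = {p ! k, p ! Suc k}"
    using e unfolding walk_edges_conv_nth by blast
  define m where "m = length p - 2 - k"
  have "e = {rev p ! m, rev p ! Suc m}" "Suc m < length (rev p)"
    using k by (auto simp: m_def rev_nth Suc_diff_Suc numeral_2_eq_2)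
  then have "edist V E e j = m"
    using edist_shortest_path_edge[OF shortest_path_rev[OF p]] by simp
  moreover have "edist V E e i = k"
    using edist_shortest_path_edge[OF p k(1)] k(2) by simp
  moreover have "length p = Suc (gdist V E i j)"
    using p by (simp add: shortest_path_def)
  ultimately show ?thesis
    using k(1) by (simp add: m_def)
qed

section \<open>Trees\<close>

lemma simple_graph_finite_edges: "simple_graph V E \<Longrightarrow> finite E"
  unfolding simple_graph_def by (meson Pow_iff finite_Pow_iff finite_subset subsetI)

lemma simple_graph_edge_in_V: "simple_graph V E \<Longrightarrow> {x, y} \<in> E \<Longrightarrow> x \<in> V \<and> y \<in> V"
  unfolding simple_graph_def by blast

lemma simple_graph_Diff: "simple_graph V E \<Longrightarrow> simple_graph V (E - X)"
  unfolding simple_graph_def by blast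

lemma gdist_predecessor:
  assumes "reachable V E r v" "v \<noteq> r"
  shows "\<exists>u. {u, v} \<in> E \<and> gdist V E r u + 1 = gdist V E r v"
proof -
  obtain p where p: "shortest_path V E p r v"
    using assms(1) reachable_shortest_path by metis
  have w: "walk V E p" "hd p = r" "last p = v" "length p = Suc (gdist V E r v)"
    using p by (simp_all add: shortest_path_def)
  have "gdist V E r v \<noteq> 0"
  proof
    assume "gdist V E r v = 0"
    then have "hd p = last p"
      using w(4) by (cases p) auto
    then show False
      using w(2,3) assms(2) by simp
  qed
  then obtain k where k: "length p = Suc (Suc k)"
    using w(4) not0_implies_Suc by auto
  have "{p ! k, p ! Suc k} \<in> E"
    using w(1) k by (simp add: walk_def)
  moreover have "p ! Suc k = v"
  proof -
    have "p \<noteq> []" using k by auto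
    then show ?thesis using w(3) k by (simp add: last_conv_nth)
  qed
  moreover have "gdist V E r (p ! k) + 1 = gdist V E r (p ! Suc k)"
    using shortest_path_gdist_nth(1)[OF p] k by simp
  ultimately show ?thesis by metis
qed

definition level_edges :: "'a set \<Rightarrow> 'a set set \<Rightarrow> 'a \<Rightarrow> 'a set set" where
  "level_edges V E r = {f \<in> E. \<exists>x y. f = {x, y} \<and> gdist V E r x = gdist V E r y}"

(* Every vertex other than r has a parent one level closer to r; the parent edges are pairwise
   distinct and none of them is a level edge. *)
lemma card_Diff_root_add_level_edges_le:
  assumes sg: "simple_graph V E" and cg: "connected_graph V E" and r: "r \<in> V"
  shows "card (V - {r}) + card (level_edges V E r) \<le> card E"
proof -
  define D where "D = gdist V E r"
  define parent where "parent v = (SOME u. {u, v} \<in> E \<and> D u + 1 = D v)" for v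
  have parent: "{parent v, v} \<in> E \<and> D (parent v) + 1 = D v" if v: "v \<in> V - {r}" for v
  proof -
    have "reachable V E r v" "v \<noteq> r"
      using v r cg by (simp_all add: connected_graph_iff_reachable)
    then have "\<exists>u. {u, v} \<in> E \<and> D u + 1 = D v"
      unfolding D_def by (rule gdist_predecessor)
    then show ?thesis
      unfolding parent_def by (rule someI_ex)
  qed
  define tree_edges where "tree_edges = (\<lambda>v. {parent v, v}) ` (V - {r})"
  have "inj_on (\<lambda>v. {parent v, v}) (V - {r})"
  proof (rule inj_onI)
    fix v w assume vw: "v \<in> V - {r}" "w \<in> V - {r}" "{parent v, v} = {parent w, w}"
    show "v = w"
      using parent[OF vw(1)] parent[OF vw(2)] vw(3) unfolding doubleton_eq_iff by auto
  qed
  then have "card tree_edges = card (V - {r})"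
    unfolding tree_edges_def by (rule card_image)
  moreover have "tree_edges \<inter> level_edges V E r = {}"
  proof -
    have "D x \<noteq> D y" if "v \<in> V - {r}" "{parent v, v} = {x, y}" for v x y
      using parent[OF that(1)] that(2) unfolding doubleton_eq_iff by auto
    then show ?thesis
      unfolding tree_edges_def level_edges_def D_def by blast
  qed
  moreover have sub: "tree_edges \<union> level_edges V E r \<subseteq> E"
    unfolding tree_edges_def level_edges_def using parent by auto
  moreover have "finite (tree_edges \<union> level_edges V E r)"
    using sub simple_graph_finite_edges[OF sg] by (rule finite_subset)
  ultimately show ?thesis
    using card_mono[OF simple_graph_finite_edges[OF sg] sub] card_Un_disjoint[of tree_edges "level_edges V E r"]
    by simp
qed

definition tree :: "'a set \<Rightarrow> 'a set set \<Rightarrow> bool" where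
  "tree V T \<longleftrightarrow> simple_graph V T \<and> connected_graph V T \<and> card T + 1 = card V"

lemma tree_gdist_edge:
  assumes t: "tree V T" and r: "r \<in> V" and e: "{x, y} \<in> T"
  shows "gdist V T r y = gdist V T r x + 1 \<or> gdist V T r x = gdist V T r y + 1"
proof -
  have sg: "simple_graph V T" and cg: "connected_graph V T" and card: "card T + 1 = card V"
    using t by (simp_all add: tree_def)
  have xy: "x \<in> V" "y \<in> V"
    using simple_graph_edge_in_V[OF sg e] by simp_all
  have "card (V - {r}) = card T"
    using card r by simp
  then have "level_edges V T r = {}"
    using card_Diff_root_add_level_edges_le[OF sg cg r] simple_graph_finite_edges[OF sg]
    by (simp add: level_edges_def)
  then have "gdist V T r x \<noteq> gdist V T r y"
    using e unfolding level_edges_def by blast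
  moreover have "gdist V T r y \<le> gdist V T r x + 1" "gdist V T r x \<le> gdist V T r y + 1"
    using cg r xy e gdist_edge_le[of V T r] by (simp_all add: connected_graph_iff_reachable insert_commute)
  ultimately show ?thesis by linarith
qed

lemma tree_walk_parity:
  assumes t: "tree V T" and r: "r \<in> V"
    and xs: "walk V T xs" "hd xs = u" "last xs = v"
  shows "even (length xs - 1 + gdist V T r u + gdist V T r v)"
proof -
  have "even (length xs - 1 + gdist V T r (hd xs) + gdist V T r (last xs))" if "walk V T xs" for xs
    using that
  proof (induction xs rule: induct_list012)
    case (3 x y zs)
    then have "even (length zs + gdist V T r y + gdist V T r (last (y # zs)))" "{x, y} \<in> T"
      by (simp_all add: walk_Cons_Cons)
    then show ?case
      using tree_gdist_edge[OF t r, of x y] by auto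
  qed (simp_all add: walk_def)
  then show ?thesis
    using xs by blast
qed

lemma tree_edge_not_reachable:
  assumes t: "tree V T" and e: "{l, m} \<in> T"
  shows "\<not> reachable V (T - {{l, m}}) l m"
proof
  assume lm: "reachable V (T - {{l, m}}) l m"
  have sg: "simple_graph V T" and cg: "connected_graph V T" and card: "card T + 1 = card V"
    using t by (simp_all add: tree_def)
  have l: "l \<in> V"
    using simple_graph_edge_in_V[OF sg e] by simp
  have "connected_graph V (T - {{l, m}})"
    using cg reachable_Diff_edge[OF lm] by (simp add: connected_graph_iff_reachable)
  then have "card (V - {l}) \<le> card (T - {{l, m}})"
    using card_Diff_root_add_level_edges_le[OF simple_graph_Diff[OF sg] _ l] by fastforce
  moreover have "card (T - {{l, m}}) + 1 = card T"
    using e simple_graph_finite_edges[OF sg] card_Suc_Diff1 by fastforce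
  ultimately show False
    using card l by simp
qed

section \<open>Cycles\<close>

lemma closing_edge_notin_walk_edges:
  assumes "distinct xs" "3 \<le> length xs"
  shows "{last xs, hd xs} \<notin> walk_edges xs"
proof
  define n where "n = length xs - 1"
  have "xs \<noteq> []" "Suc 0 < n" "Suc n = length xs"
    using assms(2) by (auto simp: n_def)
  then have ends: "last xs = xs ! n" "hd xs = xs ! 0"
    by (simp_all add: last_conv_nth hd_conv_nth n_def)
  have inj: "a = b" if "xs ! a = xs ! b" "a < length xs" "b < length xs" for a b
    using that assms(1) nth_eq_iff_index_eq by blast
  assume "{last xs, hd xs} \<in> walk_edges xs"
  then obtain k where "Suc k < length xs" "{xs ! k, xs ! Suc k} = {xs ! n, xs ! 0}"
    unfolding walk_edges_conv_nth ends by auto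
  then show False
    using inj[of k n] inj[of "Suc k" 0] inj[of k 0] inj[of "Suc k" n] \<open>Suc 0 < n\<close> \<open>Suc n = length xs\<close>
      \<open>xs \<noteq> []\<close> by (auto simp: doubleton_eq_iff)
qed

lemma cycle_edges_rotate1: "cycle_edges (rotate1 xs) = cycle_edges xs"
proof (cases xs)
  case (Cons x ys)
  then show ?thesis
    by (cases "ys = []") (auto simp: cycle_edges_def walk_edges_append walk_edges_Cons)
qed simp

lemma cycle_edges_rotate: "cycle_edges (rotate n xs) = cycle_edges xs"
  by (induction n) (simp_all add: cycle_edges_rotate1)

lemma is_cycle_last_in_set: "is_cycle V E cyc \<Longrightarrow> last cyc \<in> set cyc"
  by (rule last_in_set) (auto simp: is_cycle_def)

lemma closing_edge_in_cycle_edges: "{last cyc, hd cyc} \<in> cycle_edges cyc"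
  by (simp add: cycle_edges_def)

lemma cycle_edges_subset:
  assumes "is_cycle V E cyc"
  shows "cycle_edges cyc \<subseteq> E"
  using assms by (simp add: is_cycle_def cycle_edges_def walk_iff_walk_edges)

lemma cycle_edge_subset_set: "cyc \<noteq> [] \<Longrightarrow> f \<in> cycle_edges cyc \<Longrightarrow> f \<subseteq> set cyc"
  by (auto simp: cycle_edges_def dest: walk_edge_subset_set)

lemma cycle_edge_closing_of_rotate:
  assumes "e0 \<in> cycle_edges cyc" "cyc \<noteq> []"
  shows "\<exists>n. e0 = {last (rotate n cyc), hd (rotate n cyc)}"
proof (cases "e0 = {last cyc, hd cyc}")
  case True
  then show ?thesis
    by (metis rotate0 id_apply)
next
  case False
  then obtain k where k: "Suc k < length cyc" "e0 = {cyc ! k, cyc ! Suc k}"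
    using assms(1) by (auto simp: cycle_edges_def walk_edges_conv_nth)
  then have "rotate (Suc k) cyc = drop (Suc k) cyc @ take (Suc k) cyc"
    by (simp add: rotate_drop_take)
  then have "last (rotate (Suc k) cyc) = cyc ! k" "hd (rotate (Suc k) cyc) = cyc ! Suc k"
    using k(1) by (simp_all add: take_Suc_conv_app_nth hd_drop_conv_nth)
  then show ?thesis
    using k(2) by (metis insert_commute)
qed

(* Rotating C so that e0 becomes its closing edge leaves a path through all of C. *)
lemma cycle_path:
  assumes c: "is_cycle V E cyc" and e0: "e0 \<in> cycle_edges cyc"
  shows "\<exists>xs. walk V E xs \<and> walk_edges xs \<subseteq> cycle_edges cyc - {e0} \<and> e0 = {last xs, hd xs}
    \<and> set xs = set cyc \<and> length xs = length cyc"
proof -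
  have cyc: "distinct cyc" "3 \<le> length cyc" "walk V E cyc"
    using c by (simp_all add: is_cycle_def)
  then obtain n where n: "e0 = {last (rotate n cyc), hd (rotate n cyc)}"
    using cycle_edge_closing_of_rotate[OF e0] by fastforce
  define xs where "xs = rotate n cyc"
  have "walk_edges xs \<subseteq> cycle_edges cyc"
    using cycle_edges_rotate[of n cyc] by (auto simp: xs_def cycle_edges_def)
  moreover have "e0 \<notin> walk_edges xs"
    using closing_edge_notin_walk_edges[of xs] cyc n by (simp add: xs_def)
  moreover have "walk V E xs"
    using cyc calculation(1) cycle_edges_subset[OF c] by (auto simp: xs_def walk_iff_walk_edges)
  ultimately show ?thesis
    using n by (auto simp: xs_def)
qed

lemma cycle_vertices_reachable:
  assumes c: "is_cycle V E cyc" and e0: "e0 \<in> cycle_edges cyc" and F: "cycle_edges cyc - {e0} \<subseteq> F"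
    and x: "x \<in> set cyc" and y: "y \<in> set cyc"
  shows "reachable V F x y"
proof -
  obtain xs where "walk V E xs" "walk_edges xs \<subseteq> cycle_edges cyc - {e0}" "set xs = set cyc"
    using cycle_path[OF c e0] by blast
  then have "walk V F xs" "x \<in> set xs" "y \<in> set xs"
    using F x y by (auto simp: walk_iff_walk_edges)
  then show ?thesis
    by (rule walk_reachable)
qed

section \<open>Unicyclic graphs\<close>

lemma unicyclic_Diff_cycle_edge_tree:
  assumes U: "unicyclic V E" and c: "is_cycle V E cyc" and e0: "e0 \<in> cycle_edges cyc"
  shows "tree V (E - {e0})"
proof -
  have sg: "simple_graph V E" and cg: "connected_graph V E" and card: "card E = card V"
    using U by (simp_all add: unicyclic_def)
  obtain xs where xs: "walk V E xs" "e0 = {last xs, hd xs}" "set xs = set cyc"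
    using cycle_path[OF c e0] by blast
  define a b where "a = last xs" and "b = hd xs"
  have ab: "e0 = {a, b}" "a \<in> set cyc" "b \<in> set cyc"
    using xs by (auto simp: a_def b_def walk_def)
  have "reachable V (E - {e0}) a b"
    by (rule cycle_vertices_reachable[OF c e0 _ ab(2,3)]) (use cycle_edges_subset[OF c] in blast)
  then have "connected_graph V (E - {e0})"
    using cg reachable_Diff_edge[of V E a b] ab(1) by (simp add: connected_graph_iff_reachable)
  moreover have "card (E - {e0}) + 1 = card E"
    using e0 cycle_edges_subset[OF c] simple_graph_finite_edges[OF sg] card_Suc_Diff1 by fastforce
  ultimately show ?thesis
    using simple_graph_Diff[OF sg] card by (simp add: tree_def)
qed

lemma odd_cycle_tree_gdist_even:
  assumes U: "unicyclic V E" and c: "is_cycle V E cyc" and odd: "odd (length cyc)"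
    and e0: "e0 \<in> cycle_edges cyc" and ab: "e0 = {a, b}"
  shows "even (gdist V (E - {e0}) a b)"
proof -
  obtain xs where xs: "walk V E xs" "walk_edges xs \<subseteq> cycle_edges cyc - {e0}"
    "e0 = {last xs, hd xs}" "length xs = length cyc"
    using cycle_path[OF c e0] by blast
  have t: "tree V (E - {e0})"
    using unicyclic_Diff_cycle_edge_tree[OF U c e0] .
  have a: "a \<in> V"
    using ab e0 cycle_edges_subset[OF c] U by (auto simp: unicyclic_def dest: simple_graph_edge_in_V)
  have "walk V (E - {e0}) xs"
    using xs(1,2) by (auto simp: walk_iff_walk_edges)
  then have "even (length xs - 1 + gdist V (E - {e0}) a (hd xs) + gdist V (E - {e0}) a (last xs))"
    using tree_walk_parity[OF t a] by blast
  moreover have "{last xs, hd xs} = {a, b}"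
    using xs(3) ab by simp
  moreover have "gdist V (E - {e0}) a a = 0"
    using gdist_self[OF a] .
  ultimately show ?thesis
    using odd xs(4) by (auto simp: doubleton_eq_iff)
qed

lemma unicyclic_bridge:
  assumes U: "unicyclic V E" and c: "is_cycle V E cyc"
    and e: "{x, y} \<in> E" "{x, y} \<notin> cycle_edges cyc"
  shows "\<not> reachable V (E - {{x, y}}) x y"
proof
  assume xy: "reachable V (E - {{x, y}}) x y"
  define e0 where "e0 = {last cyc, hd cyc}"
  have e0: "e0 \<in> cycle_edges cyc"
    by (simp add: e0_def cycle_edges_def)
  have "cyc \<noteq> []"
    using c by (auto simp: is_cycle_def)
  then have "reachable V (E - {{x, y}} - {e0}) (last cyc) (hd cyc)"
    using e(2) cycle_edges_subset[OF c]
    by (intro cycle_vertices_reachable[OF c e0]) auto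
  then have "reachable V (E - {e0} - {{x, y}}) x y"
    using reachable_Diff_edge[of V "E - {{x, y}}" "last cyc" "hd cyc", OF _ xy]
    by (simp add: e0_def Diff_insert2[symmetric] insert_commute)
  moreover have "{x, y} \<in> E - {e0}"
    using e e0 by auto
  ultimately show False
    using tree_edge_not_reachable[OF unicyclic_Diff_cycle_edge_tree[OF U c e0]] by blast
qed

lemma cycle_edge_edist_parity:
  assumes U: "unicyclic V E" and c: "is_cycle V E cyc" and odd: "odd (length cyc)"
    and e: "e \<in> cycle_edges cyc" "e = {a, b}" and x: "x \<in> V"
  shows "even (edist V E e x + gdist V (E - {e}) a x)"
proof -
  have cg: "connected_graph V E" and sg: "simple_graph V E"
    using U by (simp_all add: unicyclic_def)
  have t: "tree V (E - {e})"
    using unicyclic_Diff_cycle_edge_tree[OF U c e(1)] .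
  have ab: "a \<in> V" "b \<in> V"
    using e cycle_edges_subset[OF c] simple_graph_edge_in_V[OF sg] by blast+
  obtain y where y: "y \<in> e" "gdist V E x y = edist V E e x"
    using e(2) by (simp add: edist_doubleton min_def) (metis insertI1 insertI2)
  then obtain p where p: "shortest_path V E p x y"
    using cg x ab e(2) reachable_shortest_path by (metis connected_graph_iff_reachable insert_iff singletonD)
  have "e \<notin> walk_edges p"
    using shortest_path_to_nearest_avoids_edge[OF p] y e(2) by (simp add: edist_doubleton)
  then have "walk V (E - {e}) p"
    using p walk_Diff[of V E p "{e}"] by (simp add: shortest_path_def)
  moreover have "hd p = x" "last p = y"
    using p by (simp_all add: shortest_path_def)
  ultimately have "even (length p - 1 + gdist V (E - {e}) a x + gdist V (E - {e}) a y)"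
    by (rule tree_walk_parity[OF t ab(1)])
  moreover have "length p - 1 = edist V E e x"
    using p y(2) by (simp add: shortest_path_def)
  ultimately have "even (edist V E e x + gdist V (E - {e}) a x + gdist V (E - {e}) a y)"
    by (simp only:)
  moreover have "even (gdist V (E - {e}) a y)"
    using y(1) e(2) gdist_self[OF ab(1)] odd_cycle_tree_gdist_even[OF U c odd e] by auto
  ultimately show ?thesis
    by simp
qed

lemma cycle_edge_avoiding_path_parity:
  assumes U: "unicyclic V E" and c: "is_cycle V E cyc" and odd: "odd (length cyc)"
    and e: "e \<in> cycle_edges cyc" and i: "i \<in> V" and j: "j \<in> V"
    and p: "shortest_path V E p i j" and avoid: "e \<notin> walk_edges p"
  shows "even (edist V E e i + edist V E e j) \<longleftrightarrow> even (gdist V E i j)"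
proof -
  obtain a b where ab: "e = {a, b}"
    using e by (auto simp: cycle_edges_def walk_edges_def)
  have sg: "simple_graph V E"
    using U by (simp add: unicyclic_def)
  have a: "a \<in> V"
    using e ab cycle_edges_subset[OF c] simple_graph_edge_in_V[OF sg] by blast
  have "walk V (E - {e}) p"
    using p avoid walk_Diff[of V E p "{e}"] by (simp add: shortest_path_def)
  moreover have "hd p = i" "last p = j"
    using p by (simp_all add: shortest_path_def)
  ultimately have "even (length p - 1 + gdist V (E - {e}) a i + gdist V (E - {e}) a j)"
    by (rule tree_walk_parity[OF unicyclic_Diff_cycle_edge_tree[OF U c e] a])
  moreover have "length p - 1 = gdist V E i j"
    using p by (simp add: shortest_path_def)
  ultimately have "even (gdist V E i j + gdist V (E - {e}) a i + gdist V (E - {e}) a j)"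
    by (simp only:)
  then show ?thesis
    using cycle_edge_edist_parity[OF U c odd e ab i] cycle_edge_edist_parity[OF U c odd e ab j]
    by presburger
qed

section \<open>Paths to the cycle\<close>

lemma path_to_cycleE:
  assumes "path_to_cycle V E cyc i p"
  obtains c where "c \<in> set cyc" "shortest_path V E p i c" "\<And>c'. c' \<in> set cyc \<Longrightarrow> gdist V E i c \<le> gdist V E i c'"
  using assms unfolding path_to_cycle_def by blast

lemma comp_C_iff_reachable:
  "e \<notin> cycle_edges cyc \<Longrightarrow> v \<in> comp_C V E cyc e \<longleftrightarrow> (\<exists>c\<in>set cyc. reachable V (E - {e}) c v)"
  unfolding comp_C_def reachable_def walk_def by auto

lemma path_to_cycle_off_cycle:
  assumes p: "path_to_cycle V E cyc i p" and t: "Suc t < length p"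
  shows "p ! t \<notin> set cyc"
proof
  assume "p ! t \<in> set cyc"
  obtain c where c: "shortest_path V E p i c" "gdist V E i c \<le> gdist V E i (p ! t)"
    using p \<open>p ! t \<in> set cyc\<close> by (elim path_to_cycleE) blast
  then show False
    using shortest_path_gdist_nth(1)[OF c(1), of t] t by (simp add: shortest_path_def)
qed

lemma path_to_cycle_edge_not_cycle_edge:
  assumes p: "path_to_cycle V E cyc i p" and e: "e \<in> walk_edges p"
  shows "e \<notin> cycle_edges cyc"
proof
  assume "e \<in> cycle_edges cyc"
  moreover have "cyc \<noteq> []"
    using p by (auto elim: path_to_cycleE)
  moreover obtain k where "Suc k < length p" "p ! k \<in> e"
    using e unfolding walk_edges_conv_nth by blast
  ultimately show False
    using path_to_cycle_off_cycle[OF p] cycle_edge_subset_set by blast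
qed

lemma path_to_cycle_edge_separates:
  assumes U: "unicyclic V E" and c: "is_cycle V E cyc"
    and p: "path_to_cycle V E cyc i p" and e: "e \<in> walk_edges p"
  shows "i \<notin> comp_C V E cyc e"
proof
  assume "i \<in> comp_C V E cyc e"
  moreover have nc: "e \<notin> cycle_edges cyc"
    using path_to_cycle_edge_not_cycle_edge[OF p e] .
  ultimately obtain c0 where c0: "c0 \<in> set cyc" "reachable V (E - {e}) c0 i"
    using comp_C_iff_reachable by metis
  obtain c1 where c1: "c1 \<in> set cyc" "shortest_path V E p i c1"
    using p by (elim path_to_cycleE)
  obtain k where k: "Suc k < length p" "e = {p ! k, p ! Suc k}"
    using e unfolding walk_edges_conv_nth by blast
  have "reachable V (E - {e}) c1 c0"
    using cycle_edges_subset[OF c] nc c0(1) c1(1)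
    by (intro cycle_vertices_reachable[OF c, of "{last cyc, hd cyc}"]) (auto simp: cycle_edges_def)
  then have "reachable V (E - {e}) (p ! k) (p ! Suc k)"
    using shortest_path_split_at_edge[OF c1(2) k(1)] c0(2) k(2)
    by (meson reachable_sym reachable_trans)
  moreover have "e \<in> E"
    using e c1(2) by (auto simp: shortest_path_def walk_iff_walk_edges)
  ultimately show False
    using unicyclic_bridge[OF U c] nc k(2) by blast
qed

lemma walk_to_cycle_crosses_edge:
  assumes nc: "e \<notin> cycle_edges cyc" and w: "walk V E xs"
    and out: "hd xs \<notin> comp_C V E cyc e" and into: "last xs \<in> set cyc"
  shows "e \<in> walk_edges xs"
proof (rule ccontr)
  assume "e \<notin> walk_edges xs"
  then have "reachable V (E - {e}) (last xs) (hd xs)"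
    using w walk_Diff[of V E xs "{e}"] reachable_walk reachable_sym by fastforce
  then show False
    using out nc into comp_C_iff_reachable by metis
qed

lemma separated_path_to_cycle_contains_edge:
  assumes nc: "e \<notin> cycle_edges cyc" and i: "i \<notin> comp_C V E cyc e"
    and p: "path_to_cycle V E cyc i p"
  shows "e \<in> walk_edges p"
proof -
  obtain c where "c \<in> set cyc" "shortest_path V E p i c"
    using p by (elim path_to_cycleE)
  then show ?thesis
    using i by (intro walk_to_cycle_crosses_edge[OF nc]) (auto simp: shortest_path_def)
qed

lemma path_to_cycle_edge_iff_separates:
  assumes U: "unicyclic V E" and c: "is_cycle V E cyc" and p: "path_to_cycle V E cyc i p"
  shows "e \<in> walk_edges p \<longleftrightarrow> e \<notin> cycle_edges cyc \<and> i \<notin> comp_C V E cyc e"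
  using path_to_cycle_edge_not_cycle_edge[OF p] path_to_cycle_edge_separates[OF U c p]
    separated_path_to_cycle_contains_edge[OF _ _ p] by blast

definition cycle_dist :: "'a set \<Rightarrow> 'a set set \<Rightarrow> 'a list \<Rightarrow> 'a \<Rightarrow> nat" where
  "cycle_dist V E cyc x = Min (gdist V E x ` set cyc)"

lemma path_to_cycle_cycle_dist:
  assumes cg: "connected_graph V E" and c: "is_cycle V E cyc"
    and p: "path_to_cycle V E cyc i p" and t: "t < length p"
  shows "cycle_dist V E cyc (p ! t) = length p - 1 - t"
proof -
  obtain c0 where c0: "c0 \<in> set cyc" "shortest_path V E p i c0"
    and nearest: "\<And>c'. c' \<in> set cyc \<Longrightarrow> gdist V E i c0 \<le> gdist V E i c'"
    using p unfolding path_to_cycle_def by blast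
  have w: "walk V E p" "hd p = i" "length p = Suc (gdist V E i c0)"
    using c0(2) by (simp_all add: shortest_path_def)
  have V: "i \<in> V" "p ! t \<in> V" "set cyc \<subseteq> V"
    using w t c by (auto simp: walk_def is_cycle_def hd_conv_nth)
  have "length p - 1 - t \<le> gdist V E (p ! t) c'" if c': "c' \<in> set cyc" for c'
  proof -
    have "gdist V E i c' \<le> gdist V E i (p ! t) + gdist V E (p ! t) c'"
      using cg V c' by (intro gdist_triangle) (auto simp: connected_graph_iff_reachable)
    then show ?thesis
      using nearest[OF c'] shortest_path_gdist_nth(1)[OF c0(2) t] w(3) by linarith
  qed
  moreover have "gdist V E (p ! t) c0 = length p - 1 - t"
    using shortest_path_gdist_nth(2)[OF c0(2) t] .
  ultimately show ?thesis
    unfolding cycle_dist_def using c0(1) by (intro Min_eqI) force+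
qed

(* The distance to C drops by one at each step of P_{i-i*}, so the end of a shared edge that is
   farther from C comes first on both paths. *)
lemma path_to_cycle_shared_edge_orientation:
  assumes cg: "connected_graph V E" and c: "is_cycle V E cyc"
    and p: "path_to_cycle V E cyc i p" "Suc k < length p"
    and q: "path_to_cycle V E cyc j q" "Suc l < length q"
    and shared: "{p ! k, p ! Suc k} = {q ! l, q ! Suc l}"
  shows "p ! k = q ! l"
proof (rule ccontr)
  let ?d = "cycle_dist V E cyc"
  assume "p ! k \<noteq> q ! l"
  then have "p ! k = q ! Suc l" "p ! Suc k = q ! l"
    using shared by (auto simp: doubleton_eq_iff)
  moreover have "?d (p ! k) = ?d (p ! Suc k) + 1" "?d (q ! l) = ?d (q ! Suc l) + 1"
    using path_to_cycle_cycle_dist[OF cg c p(1)] path_to_cycle_cycle_dist[OF cg c q(1)] p(2) q(2)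
    by simp_all
  ultimately show False
    by simp
qed

(* A visit of R to C would force R to cross e both before and after it. *)
lemma separated_shortest_path_avoids_cycle:
  assumes nc: "e \<notin> cycle_edges cyc" and i: "i \<notin> comp_C V E cyc e" and j: "j \<notin> comp_C V E cyc e"
    and R: "shortest_path V E R i j"
  shows "set R \<inter> set cyc = {}"
proof -
  have w: "walk V E R" "hd R = i" "last R = j" and d: "distinct R"
    using R shortest_path_distinct[OF R] by (simp_all add: shortest_path_def)
  have "R ! t \<notin> set cyc" if t: "t < length R" for t
  proof
    assume Rt: "R ! t \<in> set cyc"
    have "walk V E (take (Suc t) R)" "walk V E (rev (drop t R))"
      using w(1) t by (simp_all add: walk_take walk_drop walk_rev)
    moreover have "hd (take (Suc t) R) = i" "last (take (Suc t) R) = R ! t"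
      "hd (rev (drop t R)) = j" "last (rev (drop t R)) = R ! t"
      using w t by (simp_all add: last_take_Suc hd_rev last_rev hd_drop_conv_nth)
    ultimately have "e \<in> walk_edges (take (Suc t) R)" "e \<in> walk_edges (drop t R)"
      using walk_to_cycle_crosses_edge[OF nc] i j Rt by (metis walk_edges_rev)+
    moreover have "set (take (Suc t) R) \<inter> set (drop t R) \<subseteq> {R ! t}"
      using set_take_disj_set_drop_if_distinct[OF d, of t t] t by (auto simp: take_Suc_conv_app_nth)
    ultimately have "e \<subseteq> {R ! t}"
      using walk_edge_subset_set by blast
    moreover obtain s where s: "Suc s < length R" "e = {R ! s, R ! Suc s}"
      using \<open>e \<in> walk_edges (drop t R)\<close> walk_edges_drop_subset unfolding walk_edges_conv_nth by blast
    ultimately show False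
      using nth_eq_iff_index_eq[OF d, of s "Suc s"] by auto
  qed
  then show ?thesis
    by (auto simp: in_set_conv_nth)
qed

lemma path_to_cycle_prefix_parity:
  assumes U: "unicyclic V E" and c: "is_cycle V E cyc" and r: "r \<in> V"
    and p: "path_to_cycle V E cyc i p" and k: "Suc k < length p"
  shows "even (k + gdist V (E - {{last cyc, hd cyc}}) r i + gdist V (E - {{last cyc, hd cyc}}) r (p ! k))"
proof -
  obtain c0 where c0: "shortest_path V E p i c0"
    using p by (elim path_to_cycleE)
  have "x \<notin> set cyc" if "x \<in> set (take (Suc k) p)" for x
    using that path_to_cycle_off_cycle[OF p] k by (auto simp: in_set_conv_nth)
  then have "last cyc \<notin> set (take (Suc k) p)"
    using is_cycle_last_in_set[OF c] by blast
  then have "walk V (E - {{last cyc, hd cyc}}) (take (Suc k) p)"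
    using c0 k by (auto simp: shortest_path_def intro: walk_Diff_edge_at walk_take)
  moreover have "hd (take (Suc k) p) = i" "last (take (Suc k) p) = p ! k"
    using c0 k by (simp_all add: shortest_path_def last_take_Suc)
  ultimately have "even (length (take (Suc k) p) - 1 + gdist V (E - {{last cyc, hd cyc}}) r i
      + gdist V (E - {{last cyc, hd cyc}}) r (p ! k))"
    by (rule tree_walk_parity[OF unicyclic_Diff_cycle_edge_tree[OF U c closing_edge_in_cycle_edges] r])
  then show ?thesis
    using k by simp
qed

lemma path_to_cycle_common_edge_shortest_path_parity:
  assumes U: "unicyclic V E" and c: "is_cycle V E cyc" and r: "r \<in> V"
    and p: "path_to_cycle V E cyc i p" and q: "path_to_cycle V E cyc j q"
    and ep: "e \<in> walk_edges p" and eq: "e \<in> walk_edges q" and R: "shortest_path V E R i j"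
  shows "even (gdist V E i j + gdist V (E - {{last cyc, hd cyc}}) r i + gdist V (E - {{last cyc, hd cyc}}) r j)"
proof -
  have nc: "e \<notin> cycle_edges cyc"
    using path_to_cycle_edge_not_cycle_edge[OF p ep] .
  have "set R \<inter> set cyc = {}"
    using separated_shortest_path_avoids_cycle[OF nc _ _ R]
      path_to_cycle_edge_separates[OF U c p ep] path_to_cycle_edge_separates[OF U c q eq] by blast
  then have "last cyc \<notin> set R"
    using is_cycle_last_in_set[OF c] by blast
  then have "walk V (E - {{last cyc, hd cyc}}) R"
    using R by (auto simp: shortest_path_def intro: walk_Diff_edge_at)
  moreover have "hd R = i" "last R = j"
    using R by (simp_all add: shortest_path_def)
  ultimately have "even (length R - 1 + gdist V (E - {{last cyc, hd cyc}}) r i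
      + gdist V (E - {{last cyc, hd cyc}}) r j)"
    by (rule tree_walk_parity[OF unicyclic_Diff_cycle_edge_tree[OF U c closing_edge_in_cycle_edges] r])
  moreover have "length R - 1 = gdist V E i j"
    using R by (simp add: shortest_path_def)
  ultimately show ?thesis
    by (simp only:)
qed

lemma path_to_cycle_common_edge_parity:
  assumes U: "unicyclic V E" and c: "is_cycle V E cyc" and i: "i \<in> V" and j: "j \<in> V"
    and p: "path_to_cycle V E cyc i p" and q: "path_to_cycle V E cyc j q"
    and ep: "e \<in> walk_edges p" and eq: "e \<in> walk_edges q"
  shows "even (edist V E e i + edist V E e j) \<longleftrightarrow> even (gdist V E i j)"
proof -
  have cg: "connected_graph V E"
    using U by (simp add: unicyclic_def)
  obtain ci cj where ci: "shortest_path V E p i ci" and cj: "shortest_path V E q j cj"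
    using p q by (elim path_to_cycleE)
  obtain k where k: "Suc k < length p" "e = {p ! k, p ! Suc k}"
    using ep unfolding walk_edges_conv_nth by blast
  obtain l where l: "Suc l < length q" "e = {q ! l, q ! Suc l}"
    using eq unfolding walk_edges_conv_nth by blast
  have same_end: "q ! l = p ! k"
    using path_to_cycle_shared_edge_orientation[OF cg c p k(1) q l(1)] k(2) l(2) by simp
  have "edist V E e i = k" "edist V E e j = l"
    using edist_shortest_path_edge[OF ci k(1)] edist_shortest_path_edge[OF cj l(1)] k(2) l(2) by simp_all
  moreover obtain R where R: "shortest_path V E R i j"
    using cg i j reachable_shortest_path by (metis connected_graph_iff_reachable)
  ultimately show ?thesis
    using path_to_cycle_common_edge_shortest_path_parity[OF U c i p q ep eq R]
      path_to_cycle_prefix_parity[OF U c i p k(1)] path_to_cycle_prefix_parity[OF U c i q l(1)]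
    unfolding same_end by presburger
qed

theorem mainTheorem11:
  fixes V :: "'a set" and E :: "'a set set" and cyc :: "'a list"
  assumes "unicyclic V E" and "is_cycle V E cyc" and "odd (length cyc)"
  shows
  "(\<forall>e\<in>E. \<forall>i\<in>V. \<forall>j\<in>V. \<forall>p q. i \<noteq> j \<longrightarrow>
      path_to_cycle V E cyc i p \<longrightarrow> path_to_cycle V E cyc j q \<longrightarrow>
      ((e \<notin> cycle_edges cyc \<and> i \<notin> comp_C V E cyc e \<and> j \<notin> comp_C V E cyc e)
        \<longleftrightarrow> (e \<in> walk_edges p \<and> e \<in> walk_edges q)))
 \<and> (\<forall>e\<in>cycle_edges cyc. \<forall>i\<in>V. \<forall>j\<in>V. \<forall>p. shortest_path V E p i j \<longrightarrow>
      e \<in> walk_edges p \<longrightarrow>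
      (even (edist V E e i + edist V E e j) \<longleftrightarrow> \<not> even (gdist V E i j)))
 \<and> (\<forall>e\<in>cycle_edges cyc. \<forall>i\<in>V. \<forall>j\<in>V. \<forall>p. shortest_path V E p i j \<longrightarrow>
      e \<notin> walk_edges p \<longrightarrow>
      (even (edist V E e i + edist V E e j) \<longleftrightarrow> even (gdist V E i j)))
 \<and> (\<forall>e\<in>E. \<forall>i\<in>V. \<forall>j\<in>V. \<forall>p q.
      path_to_cycle V E cyc i p \<longrightarrow> path_to_cycle V E cyc j q \<longrightarrow>
      e \<in> walk_edges p \<longrightarrow> e \<in> walk_edges q \<longrightarrow>
      (even (edist V E e i + edist V E e j) \<longleftrightarrow> even (gdist V E i j)))"
proof (intro conjI)
  note U = assms(1) and c = assms(2)
  show "\<forall>e\<in>E. \<forall>i\<in>V. \<forall>j\<in>V. \<forall>p q. i \<noteq> j \<longrightarrow>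
      path_to_cycle V E cyc i p \<longrightarrow> path_to_cycle V E cyc j q \<longrightarrow>
      ((e \<notin> cycle_edges cyc \<and> i \<notin> comp_C V E cyc e \<and> j \<notin> comp_C V E cyc e)
        \<longleftrightarrow> (e \<in> walk_edges p \<and> e \<in> walk_edges q))"
    using path_to_cycle_edge_iff_separates[OF U c] by blast
  show "\<forall>e\<in>cycle_edges cyc. \<forall>i\<in>V. \<forall>j\<in>V. \<forall>p. shortest_path V E p i j \<longrightarrow>
      e \<in> walk_edges p \<longrightarrow>
      (even (edist V E e i + edist V E e j) \<longleftrightarrow> \<not> even (gdist V E i j))"
    using shortest_path_edist_add by (metis even_plus_one_iff)
  show "\<forall>e\<in>cycle_edges cyc. \<forall>i\<in>V. \<forall>j\<in>V. \<forall>p. shortest_path V E p i j \<longrightarrow>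
      e \<notin> walk_edges p \<longrightarrow>
      (even (edist V E e i + edist V E e j) \<longleftrightarrow> even (gdist V E i j))"
    using cycle_edge_avoiding_path_parity[OF assms] by blast
  show "\<forall>e\<in>E. \<forall>i\<in>V. \<forall>j\<in>V. \<forall>p q.
      path_to_cycle V E cyc i p \<longrightarrow> path_to_cycle V E cyc j q \<longrightarrow>
      e \<in> walk_edges p \<longrightarrow> e \<in> walk_edges q \<longrightarrow>
      (even (edist V E e i + edist V E e j) \<longleftrightarrow> even (gdist V E i j))"
    using path_to_cycle_common_edge_parity[OF U c] by blast
qed

end
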